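(* Let $G=(V,E)$ be an undirected graph without isolated vertices, let $v\in V$, and let $G_v$ be the subgraph of $G$ induced by the set of neighbors of $v$ (not including $v$). Then $\nu_v$ equals the fractional clique number of $G_v$ (equivalently, the fractional chromatic number of $G_v$).
   Context: Vertex Cover set system of $G$: agents are the vertices, feasible sets are the vertex covers of $G$. For a cost vector $c$ and $y(X)=\sum_{u\in X}y_u$: let $S$ be a vertex cover minimizing $c(S)$ (ties broken lexicographically); $\nu(c)$ is the maximum of $x(S)$ over $x\in\mathbb R^V$ subject to $x_u\ge c_u$ for all $u$, $x_u=c_u$ for $u\notin S$, and $x(S)\le x(T)$ for every vertex cover $T$. $\nu_v=\nu(\mathbf 1_v)$, where $\mathbf 1_v$ has $1$ at $v$ and $0$ elsewhere. The fractional clique number of a graph $H$ is the maximum of $\sum_u x_u$ subject to $x_u\ge 0$ and $\sum_{u\in I}x_u\le1$ for every independent set $I$ of $H$. *)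

theory Defs
  imports Complex_Main "HOL-Library.List_Lexorder"
begin

definition is_graph :: "'a set \<Rightarrow> ('a \<Rightarrow> 'a \<Rightarrow> bool) \<Rightarrow> bool" where
  "is_graph V E \<longleftrightarrow> finite V \<and> (\<forall>u w. E u w \<longrightarrow> u \<in> V \<and> w \<in> V)
     \<and> (\<forall>u w. E u w \<longrightarrow> E w u) \<and> (\<forall>u. \<not> E u u)"

definition no_isolated :: "'a set \<Rightarrow> ('a \<Rightarrow> 'a \<Rightarrow> bool) \<Rightarrow> bool" where
  "no_isolated V E \<longleftrightarrow> (\<forall>u\<in>V. \<exists>w. E u w)"

definition vertex_cover :: "'a set \<Rightarrow> ('a \<Rightarrow> 'a \<Rightarrow> bool) \<Rightarrow> 'a set \<Rightarrow> bool" where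
  "vertex_cover V E T \<longleftrightarrow> T \<subseteq> V \<and> (\<forall>u w. E u w \<longrightarrow> u \<in> T \<or> w \<in> T)"

definition min_cost_covers :: "'a set \<Rightarrow> ('a \<Rightarrow> 'a \<Rightarrow> bool) \<Rightarrow> ('a \<Rightarrow> real) \<Rightarrow> 'a set set" where
  "min_cost_covers V E c = {S. vertex_cover V E S \<and>
     (\<forall>T. vertex_cover V E T \<longrightarrow> sum c S \<le> sum c T)}"

definition lex_le :: "'a::linorder set \<Rightarrow> 'a set \<Rightarrow> bool" where
  "lex_le A B \<longleftrightarrow> sorted_list_of_set A \<le> sorted_list_of_set B"

definition chosen_cover :: "'a::linorder set \<Rightarrow> ('a \<Rightarrow> 'a \<Rightarrow> bool) \<Rightarrow> ('a \<Rightarrow> real) \<Rightarrow> 'a set" where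
  "chosen_cover V E c = (THE S. S \<in> min_cost_covers V E c \<and>
     (\<forall>T \<in> min_cost_covers V E c. lex_le S T))"

definition nu :: "'a::linorder set \<Rightarrow> ('a \<Rightarrow> 'a \<Rightarrow> bool) \<Rightarrow> ('a \<Rightarrow> real) \<Rightarrow> real" where
  "nu V E c = (let S = chosen_cover V E c in
     Greatest (\<lambda>r. \<exists>x :: 'a \<Rightarrow> real.
        (\<forall>u\<in>V. x u \<ge> c u) \<and> (\<forall>u\<in>V - S. x u = c u)
        \<and> (\<forall>T. vertex_cover V E T \<longrightarrow> sum x S \<le> sum x T)
        \<and> r = sum x S))"

definition unit_cost :: "'a \<Rightarrow> 'a \<Rightarrow> real" where
  "unit_cost v = (\<lambda>u. if u = v then 1 else 0)"

definition nu_v :: "'a::linorder set \<Rightarrow> ('a \<Rightarrow> 'a \<Rightarrow> bool) \<Rightarrow> 'a \<Rightarrow> real" where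
  "nu_v V E v = nu V E (unit_cost v)"

definition independent :: "'a set \<Rightarrow> ('a \<Rightarrow> 'a \<Rightarrow> bool) \<Rightarrow> 'a set \<Rightarrow> bool" where
  "independent W F I \<longleftrightarrow> I \<subseteq> W \<and> (\<forall>u\<in>I. \<forall>w\<in>I. \<not> F u w)"

definition frac_clique_number :: "'a set \<Rightarrow> ('a \<Rightarrow> 'a \<Rightarrow> bool) \<Rightarrow> real" where
  "frac_clique_number W F = Greatest (\<lambda>r. \<exists>x :: 'a \<Rightarrow> real.
      (\<forall>u\<in>W. x u \<ge> 0) \<and> (\<forall>I. independent W F I \<longrightarrow> sum x I \<le> 1)
      \<and> r = sum x W)"

definition neighbors :: "('a \<Rightarrow> 'a \<Rightarrow> bool) \<Rightarrow> 'a \<Rightarrow> 'a set" where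
  "neighbors E v = {u. E v u}"

definition induced :: "('a \<Rightarrow> 'a \<Rightarrow> bool) \<Rightarrow> 'a set \<Rightarrow> 'a \<Rightarrow> 'a \<Rightarrow> bool" where
  "induced E W = (\<lambda>u w. u \<in> W \<and> w \<in> W \<and> E u w)"

end

theory Submission
  imports Defs
begin

(* For the unit cost vector c = 1_v the covers of cost 0 are exactly the
   vertex covers avoiding v (V - {v} is one), so the chosen cover S avoids v and hence
   contains every neighbour of v.  A feasible vector x for nu pays c_v = 1 on v, and
   comparing x(S) = x(V) - 1 with the covers V - I (I independent in G_v) and
   V - {u, v} (u in S not adjacent to v) shows that x restricted to N(v) is a
   fractional clique of G_v and that x vanishes on S - N(v). *)

lemma lex_least_member:
  fixes V :: "'a::linorder set"
  assumes "finite V" and "M \<noteq> {}" and "M \<subseteq> Pow V"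
  shows "(THE S. S \<in> M \<and> (\<forall>T\<in>M. lex_le S T)) \<in> M"
proof -
  have fin_M: "finite M"
    using assms(1,3) by (meson finite_Pow_iff finite_subset)
  have fin_members: "finite A" if "A \<in> M" for A
    using assms(1,3) that by (meson PowD finite_subset subsetD)
  let ?L = "sorted_list_of_set ` M"
  have "Min ?L \<in> ?L"
    using fin_M assms(2) by (intro Min_in) auto
  then obtain S0 where S0: "S0 \<in> M" "Min ?L = sorted_list_of_set S0" by auto
  have least: "S0 \<in> M \<and> (\<forall>T\<in>M. lex_le S0 T)"
    using S0 fin_M unfolding lex_le_def by (metis Min_le finite_imageI image_eqI)
  have unique: "S1 = S0" if "S1 \<in> M \<and> (\<forall>T\<in>M. lex_le S1 T)" for S1
  proof -
    have "sorted_list_of_set S1 = sorted_list_of_set S0"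
      using that least unfolding lex_le_def by (meson order_antisym)
    then show ?thesis
      using fin_members that S0(1) by (metis sorted_list_of_set.set_sorted_key_list_of_set)
  qed
  have "(THE S. S \<in> M \<and> (\<forall>T\<in>M. lex_le S T)) = S0"
    using least unique by (rule the_equality)
  with S0(1) show ?thesis by simp
qed

lemma chosen_cover_min_cost:
  fixes V :: "'a::linorder set"
  assumes "finite V" and "min_cost_covers V E c \<noteq> {}"
  shows "chosen_cover V E c \<in> min_cost_covers V E c"
  unfolding chosen_cover_def
  using assms by (intro lex_least_member) (auto simp: min_cost_covers_def vertex_cover_def)

lemma complement_cover_iff:
  assumes "is_graph V E" and "A \<subseteq> V"
  shows "vertex_cover V E (V - A) \<longleftrightarrow> (\<forall>u\<in>A. \<forall>w\<in>A. \<not> E u w)"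
  using assms unfolding is_graph_def vertex_cover_def by blast

lemma unit_cost_nonneg: "unit_cost v u \<ge> 0"
  unfolding unit_cost_def by simp

lemma sum_unit_cost:
  assumes "finite A"
  shows "sum (unit_cost v) A = (if v \<in> A then 1 else 0)"
  using assms unfolding unit_cost_def by (simp add: sum.delta)

text \<open>Covers avoiding v cost nothing (V - {v} is one), so the chosen cover avoids v.\<close>

lemma chosen_cover_unit_cost:
  fixes V :: "'a::linorder set"
  assumes graph: "is_graph V E" and "v \<in> V"
  defines "S \<equiv> chosen_cover V E (unit_cost v)"
  shows "vertex_cover V E S" and "v \<notin> S"
proof -
  have fin_V: "finite V" using graph unfolding is_graph_def by simp
  have cover_avoiding_v: "vertex_cover V E (V - {v})"
    using complement_cover_iff[OF graph] graph \<open>v \<in> V\<close> unfolding is_graph_def by auto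
  have "sum (unit_cost v) (V - {v}) \<le> sum (unit_cost v) T" for T
    using fin_V by (simp add: sum_unit_cost sum_nonneg unit_cost_def)
  then have "V - {v} \<in> min_cost_covers V E (unit_cost v)"
    using cover_avoiding_v unfolding min_cost_covers_def by blast
  then have "S \<in> min_cost_covers V E (unit_cost v)"
    unfolding S_def using fin_V by (intro chosen_cover_min_cost) auto
  then have cover: "vertex_cover V E S"
    and cheapest: "sum (unit_cost v) S \<le> sum (unit_cost v) (V - {v})"
    using cover_avoiding_v unfolding min_cost_covers_def by auto
  show "vertex_cover V E S" by (rule cover)
  have "finite S" using cover fin_V unfolding vertex_cover_def by (metis finite_subset)
  then show "v \<notin> S"
    using cheapest fin_V by (auto simp: sum_unit_cost split: if_splits)
qed

definition nu_feasible ::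
    "'a set \<Rightarrow> ('a \<Rightarrow> 'a \<Rightarrow> bool) \<Rightarrow> ('a \<Rightarrow> real) \<Rightarrow> 'a set \<Rightarrow> ('a \<Rightarrow> real) \<Rightarrow> bool" where
  "nu_feasible V E c S x \<longleftrightarrow> (\<forall>u\<in>V. x u \<ge> c u) \<and> (\<forall>u\<in>V - S. x u = c u)
     \<and> (\<forall>T. vertex_cover V E T \<longrightarrow> sum x S \<le> sum x T)"

definition frac_clique :: "'a set \<Rightarrow> ('a \<Rightarrow> 'a \<Rightarrow> bool) \<Rightarrow> ('a \<Rightarrow> real) \<Rightarrow> bool" where
  "frac_clique W F x \<longleftrightarrow> (\<forall>u\<in>W. x u \<ge> 0) \<and> (\<forall>I. independent W F I \<longrightarrow> sum x I \<le> 1)"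

lemma nu_as_greatest:
  "nu V E c = Greatest (\<lambda>r. \<exists>x. nu_feasible V E c (chosen_cover V E c) x
                               \<and> r = sum x (chosen_cover V E c))"
  unfolding nu_def nu_feasible_def Let_def by simp

lemma frac_clique_number_as_greatest:
  "frac_clique_number W F = Greatest (\<lambda>r. \<exists>x. frac_clique W F x \<and> r = sum x W)"
  unfolding frac_clique_number_def frac_clique_def by simp

context
  fixes V :: "'a set" and E :: "'a \<Rightarrow> 'a \<Rightarrow> bool" and v :: 'a and S :: "'a set"
  assumes graph: "is_graph V E" and v_in: "v \<in> V"
    and S_cover: "vertex_cover V E S" and v_notin_S: "v \<notin> S"
begin

private lemma basic_facts:
  shows fin_V: "finite V" and S_sub: "S \<subseteq> V" and fin_S: "finite S"
    and N_sub: "neighbors E v \<subseteq> S" and N_sub_V: "neighbors E v \<subseteq> V"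
    and v_notin_N: "v \<notin> neighbors E v"
  using graph S_cover v_notin_S
  unfolding is_graph_def vertex_cover_def neighbors_def
  by (auto intro: finite_subset)

text \<open>A feasible vector for nu restricts to a fractional clique of G_v with the same
  value: it vanishes on S - N(v).\<close>

lemma nu_feasible_to_frac_clique:
  assumes x: "nu_feasible V E (unit_cost v) S x"
  shows "frac_clique (neighbors E v) (induced E (neighbors E v)) x"
    and "sum x S = sum x (neighbors E v)"
proof -
  let ?N = "neighbors E v"
  have lower: "\<forall>u\<in>V. x u \<ge> unit_cost v u" and fixed: "\<forall>u\<in>V - S. x u = unit_cost v u"
    and stable: "\<And>T. vertex_cover V E T \<Longrightarrow> sum x S \<le> sum x T"
    using x unfolding nu_feasible_def by auto
  have x_v: "x v = 1" using fixed v_in v_notin_S unfolding unit_cost_def by simp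
  have x_nonneg: "x u \<ge> 0" if "u \<in> V" for u
    using lower that unit_cost_nonneg by (meson order_trans)
  have "sum x (V - S) = sum (unit_cost v) (V - S)" using fixed by (intro sum.cong) auto
  also have "\<dots> = 1" using fin_V v_in v_notin_S by (simp add: sum_unit_cost)
  finally have x_S: "sum x S = sum x V - 1"
    using sum_diff[OF fin_V S_sub, of x] by simp
  have independent_bound: "sum x I \<le> 1" if "independent ?N (induced E ?N) I" for I
  proof -
    have I_sub: "I \<subseteq> V" using that N_sub_V unfolding independent_def by auto
    have "vertex_cover V E (V - I)"
      using that complement_cover_iff[OF graph I_sub]
      unfolding independent_def induced_def by blast
    then have "sum x S \<le> sum x V - sum x I"
      using stable sum_diff[OF fin_V I_sub, of x] by metis
    then show ?thesis using x_S by simp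
  qed
  show "frac_clique ?N (induced E ?N) x"
    unfolding frac_clique_def using independent_bound x_nonneg N_sub_V by auto
  have vanish: "x u = 0" if u: "u \<in> S - ?N" for u
  proof -
    have uv_sub: "{u, v} \<subseteq> V" using u S_sub v_in by auto
    have "\<not> E u v" "\<not> E v u" "\<not> E u u" "\<not> E v v"
      using u graph unfolding neighbors_def is_graph_def by auto
    then have "vertex_cover V E (V - {u, v})"
      using complement_cover_iff[OF graph uv_sub] by auto
    then have "sum x S \<le> sum x V - sum x {u, v}"
      using stable sum_diff[OF fin_V uv_sub, of x] by metis
    moreover have "u \<noteq> v" using u v_notin_S by auto
    ultimately have "sum x S \<le> sum x V - (x u + x v)" by simp
    then show ?thesis using x_S x_v x_nonneg u S_sub by force
  qed
  have "sum x S = sum x ?N + sum x (S - ?N)"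
    using sum.subset_diff[OF N_sub fin_S, of x] by (simp add: add.commute)
  also have "sum x (S - ?N) = 0" using vanish by simp
  finally show "sum x S = sum x ?N" by simp
qed

lemma frac_clique_to_nu_feasible:
  assumes y: "frac_clique (neighbors E v) (induced E (neighbors E v)) y"
  defines "x \<equiv> \<lambda>u. if u \<in> neighbors E v then y u else unit_cost v u"
  shows "nu_feasible V E (unit_cost v) S x" and "sum x S = sum y (neighbors E v)"
proof -
  let ?N = "neighbors E v"
  have y_nonneg: "\<forall>u\<in>?N. y u \<ge> 0"
    and y_bound: "\<And>I. independent ?N (induced E ?N) I \<Longrightarrow> sum y I \<le> 1"
    using y unfolding frac_clique_def by auto
  have x_nonneg: "x u \<ge> 0" for u
    using y_nonneg unit_cost_nonneg unfolding x_def by auto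
  have x_v: "x v = 1" using v_notin_N unfolding x_def unit_cost_def by simp
  have "sum x (S - ?N) = 0"
    unfolding x_def unit_cost_def using v_notin_S by (intro sum.neutral) auto
  then have x_S: "sum x S = sum x ?N"
    using sum.subset_diff[OF N_sub fin_S, of x] by simp
  also have "\<dots> = sum y ?N" unfolding x_def by simp
  finally show "sum x S = sum y ?N" .
  have stable: "sum x S \<le> sum x T" if T: "vertex_cover V E T" for T
  proof -
    have fin_T: "finite T" using T fin_V unfolding vertex_cover_def by (metis finite_subset)
    show ?thesis
    proof (cases "v \<in> T")
      case False
      then have "?N \<subseteq> T" using T unfolding vertex_cover_def neighbors_def by blast
      then show ?thesis using x_S fin_T x_nonneg by (simp add: sum_mono2)
    next
      case True
      have "independent ?N (induced E ?N) (?N - T)"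
        using T unfolding independent_def induced_def vertex_cover_def by blast
      then have uncovered: "sum x (?N - T) \<le> x v"
        using y_bound x_v unfolding x_def by simp
      have covered: "sum x (?N \<inter> T) \<le> sum x (T - {v})"
        using fin_T x_nonneg v_notin_N by (intro sum_mono2) auto
      have "sum x ?N = sum x (?N \<inter> T) + sum x (?N - T)"
        using fin_V N_sub_V by (metis finite_subset sum.Int_Diff)
      also have "\<dots> \<le> sum x (T - {v}) + x v" using covered uncovered by simp
      also have "\<dots> = sum x T" using sum.remove[OF fin_T True, of x] by simp
      finally show ?thesis using x_S by simp
    qed
  qed
  have "\<forall>u\<in>V. x u \<ge> unit_cost v u"
    using y_nonneg v_notin_N unfolding x_def unit_cost_def by auto
  moreover have "\<forall>u\<in>V - S. x u = unit_cost v u" using N_sub unfolding x_def by auto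
  ultimately show "nu_feasible V E (unit_cost v) S x"
    unfolding nu_feasible_def using stable by blast
qed

lemma attainable_values_agree:
  "(\<lambda>r. \<exists>x. nu_feasible V E (unit_cost v) S x \<and> r = sum x S)
   = (\<lambda>r. \<exists>x. frac_clique (neighbors E v) (induced E (neighbors E v)) x
              \<and> r = sum x (neighbors E v))"
  using nu_feasible_to_frac_clique frac_clique_to_nu_feasible by (intro ext iffI) metis+

end

theorem mainTheorem5:
  fixes V :: "'a::linorder set" and E :: "'a \<Rightarrow> 'a \<Rightarrow> bool" and v :: 'a
  assumes "is_graph V E" and "no_isolated V E" and "v \<in> V"
  shows "nu_v V E v = frac_clique_number (neighbors E v) (induced E (neighbors E v))"
proof -
  let ?S = "chosen_cover V E (unit_cost v)"
  have "vertex_cover V E ?S" and "v \<notin> ?S"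
    using chosen_cover_unit_cost[OF assms(1,3)] by auto
  then show ?thesis
    unfolding nu_v_def nu_as_greatest frac_clique_number_as_greatest
    using attainable_values_agree[OF assms(1,3)] by simp
qed

end
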